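(* Fix $n$, generators $x_{i_1},\dots,x_{i_k}\in\mathcal{B}_n$, an index $j$, integers $a_h$ ($h\ne j$), and set $V(e)=V_n(x_{i_1}^{a_1}\cdots x_{i_j}^{e}\cdots x_{i_k}^{a_k})$ for $e\in\mathbb{Z}$. Suppose $\deg V(e+1)\le\deg V(e)$ for some $e$. Then for all $m\ge1$, $\deg V(e+m+1)>1+\deg V(e+m)$, and for all $m\ge2$, $\deg V(e+m)=\deg V(e)+3m-2$ and $V(e+m)$ has the same leading coefficient as $V(e)$.
   Context: $\mathcal{B}_n$ is the Artin braid group with generators $x_1,\dots,x_{n-1}$; $V_n(\beta)$ is the Jones polynomial of the closure of $\beta$, normalized by $V(\text{unknot})=1$, $q^{-1}V_{L_+}-qV_{L_-}=(q^{1/2}-q^{-1/2})V_{L_0}$, as a Laurent polynomial in $s=q^{-1/2}$. Conventions: closures of $\alpha x_i^{e+2}\gamma$, $\alpha x_i^{e+1}\gamma$, $\alpha x_i^{e}\gamma$ play the roles of $L_-,L_0,L_+$ (e.g. the closure of $x_1^2\in\mathcal B_2$ has Jones polynomial $-s-s^5$). For a nonzero Laurent polynomial, $\deg$ is its highest exponent and the leading coefficient is the coefficient of that term. *)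

theory Defs
  imports Main
begin

text \<open>Braid words: a letter (i, 1) stands for the Artin generator x_i and (i, -1) for its inverse.
  A Laurent polynomial in one variable is represented by its (finitely supported)
  integer coefficient function int \<Rightarrow> int.\<close>

type_synonym bword = "(nat \<times> int) list"
type_synonym laurent = "int \<Rightarrow> int"

definition gen_power :: "nat \<Rightarrow> int \<Rightarrow> bword" where
  "gen_power i a = replicate (nat \<bar>a\<bar>) (i, sgn a)"

definition monomial_word :: "nat list \<Rightarrow> int list \<Rightarrow> bword" where
  "monomial_word is as = concat (map (\<lambda>(i, a). gen_power i a) (zip is as))"

text \<open>Kauffman states of the closed braid diagram: a boolean per crossing,
  True = smoothing giving the identity (vertical) tangle, False = cup-cap (e_i) tangle.
  Nodes (t,p): strand position p (1..n) at level t (0..L); level L is glued to level 0.\<close>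

definition diag_nodes :: "nat \<Rightarrow> bword \<Rightarrow> (nat \<times> nat) set" where
  "diag_nodes n w = {(t, p). t \<le> length w \<and> 1 \<le> p \<and> p \<le> n}"

definition diag_edges :: "nat \<Rightarrow> bword \<Rightarrow> bool list \<Rightarrow> ((nat \<times> nat) \<times> (nat \<times> nat)) set" where
  "diag_edges n w st =
     {((length w, p), (0, p)) | p. 1 \<le> p \<and> p \<le> n}
   \<union> {((t, p), (Suc t, p)) | t p. t < length w \<and> 1 \<le> p \<and> p \<le> n \<and>
          (p \<noteq> fst (w ! t) \<and> p \<noteq> Suc (fst (w ! t)) \<or> st ! t)}
   \<union> {((t, fst (w ! t)), (t, Suc (fst (w ! t)))) | t. t < length w \<and> \<not> st ! t}
   \<union> {((Suc t, fst (w ! t)), (Suc t, Suc (fst (w ! t)))) | t. t < length w \<and> \<not> st ! t}"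

definition loops :: "nat \<Rightarrow> bword \<Rightarrow> bool list \<Rightarrow> nat" where
  "loops n w st = card (diag_nodes n w // ((diag_edges n w st \<union> (diag_edges n w st)\<inverse>)\<^sup>*))"

text \<open>Exponent of A contributed by a state: x_i is a negative crossing (paper's convention),
  with bracket  <x_i> = A^{-1} id + A e_i,  <x_i^{-1}> = A id + A^{-1} e_i.\<close>
definition state_exp :: "bword \<Rightarrow> bool list \<Rightarrow> int" where
  "state_exp w st = (\<Sum>t<length w. if st ! t then - snd (w ! t) else snd (w ! t))"

text \<open>Kauffman bracket <D> = sum_S A^{a(S)} d^{loops(S)-1}, d = -A^2 - A^{-2};
  coefficient of A^m.\<close>
definition bracket_coeff :: "nat \<Rightarrow> bword \<Rightarrow> laurent" where
  "bracket_coeff n w m =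
     (\<Sum>st\<in>{st. length st = length w}.
        let k = loops n w st - 1 in
        (\<Sum>j\<le>k. if state_exp w st + 4 * int j - 2 * int k = m
                  then (-1) ^ k * int (k choose j) else 0))"

text \<open>f = (-A^3)^{-writhe} <D>, writhe = - (exponent sum); coefficient of A^m.\<close>
definition fpoly_coeff :: "nat \<Rightarrow> bword \<Rightarrow> laurent" where
  "fpoly_coeff n w m =
     (let E = (\<Sum>t<length w. snd (w ! t)) in
      (-1) ^ nat \<bar>E\<bar> * bracket_coeff n w (m - 3 * E))"

text \<open>Jones polynomial V_n in the variable s = q^{-1/2} = A^2: coefficient of s^k.\<close>
definition jones :: "nat \<Rightarrow> bword \<Rightarrow> laurent" where
  "jones n w k = fpoly_coeff n w (2 * k)"

definition ldeg :: "laurent \<Rightarrow> int" where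
  "ldeg c = Max {k. c k \<noteq> 0}"

definition lcoeff :: "laurent \<Rightarrow> int" where
  "lcoeff c = c (ldeg c)"

end

theory Submission
  imports Defs "HOL-Computational_Algebra.Formal_Laurent_Series" "HOL-Computational_Algebra.Primes"
begin

text \<open>
  Inserting a crossing x_i gives the skein relation
  <x_i> = A^{-1} <id> + A <e_i>, and a crossing stacked on an e_i smoothing is a kink, contributing
  -A^{\<plusminus>3} (two stacked cup-caps enclose one extra loop).  For the braids W(x) carrying the
  exponent x at the chosen generator this yields the three-term recurrence
  <W(x+2)> = (A^{-1} - A^3) <W(x+1)> + A^2 <W(x)>, which in the Jones variable s = A^2 reads
  V(x+2)(k) = -V(x+1)(k-1) + V(x+1)(k-3) + V(x)(k-4).
  If deg V(e+1) \<le> deg V(e), the last term alone reaches the top degree of V(e+2), so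
  deg V(e+2) = deg V(e) + 4 with the same leading coefficient.  From then on each degree exceeds
  the previous one by at least 2, the middle term dominates, and every step adds exactly 3.
\<close>

unbundle fps_syntax

abbreviation reach :: "('a \<times> 'a) set \<Rightarrow> ('a \<times> 'a) set" where
  "reach E \<equiv> (E \<union> E\<inverse>)\<^sup>*"

lemma equiv_reach: "equiv UNIV (reach E)"
  by (intro equivI refl_rtrancl sym_rtrancl[OF sym_Un_converse] trans_rtrancl) auto

lemma card_image_eq_if_same_fibres:
  assumes "\<And>x y. x \<in> A \<Longrightarrow> y \<in> A \<Longrightarrow> g x = g y \<longleftrightarrow> h x = h y"
  shows "card (g ` A) = card (h ` A)"
proof -
  define \<phi> where "\<phi> = h \<circ> inv_into A g"
  have \<phi>: "\<phi> (g x) = h x" if "x \<in> A" for x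
    using assms[of "inv_into A g (g x)" x] that inv_into_into[of "g x" g A] f_inv_into_f[of "g x" g A]
    by (auto simp: \<phi>_def)
  have "h ` A = \<phi> ` g ` A"
    using \<phi> by (auto simp: image_image)
  moreover have "inj_on \<phi> (g ` A)"
    using \<phi> assms by (auto intro!: inj_onI)
  ultimately show ?thesis
    by (simp add: card_image)
qed

lemma reach_map:
  assumes "map_prod f f ` E1 \<subseteq> E2 \<union> Id" "(x, y) \<in> reach E1"
  shows "(f x, f y) \<in> reach E2"
  using assms(2)
proof (induction rule: rtrancl_induct)
  case (step y z)
  have image: "(f u, f v) \<in> E2 \<union> Id" if "(u, v) \<in> E1" for u v
    using assms(1) image_eqI[of "(f u, f v)" "map_prod f f" "(u, v)" E1] that by auto
  have "f y = f z \<or> (f y, f z) \<in> E2 \<union> E2\<inverse>"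
    using step.hyps(2) image[of y z] image[of z y] by auto
  then show ?case
  proof
    assume "f y = f z"
    then show ?case using step.IH by simp
  next
    assume "(f y, f z) \<in> E2 \<union> E2\<inverse>"
    then show ?case by (rule rtrancl_into_rtrancl[OF step.IH])
  qed
qed simp

lemma reach_lift:
  assumes "E2 \<subseteq> map_prod f f ` E1" "E1 \<subseteq> N1 \<times> N1"
    and fibres: "\<And>x y. x \<in> N1 \<Longrightarrow> y \<in> N1 \<Longrightarrow> f x = f y \<Longrightarrow> (x, y) \<in> reach E1"
    and "(f x, v) \<in> reach E2" "x \<in> N1" "y \<in> N1" "f y = v"
  shows "(x, y) \<in> reach E1"
  using assms(4,6,7)
proof (induction arbitrary: y rule: rtrancl_induct)
  case base
  then show ?case using fibres[OF \<open>x \<in> N1\<close>] by simp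
next
  case (step u v)
  have "\<exists>x' y'. (x', y') \<in> E1 \<union> E1\<inverse> \<and> f x' = u \<and> f y' = v"
    using step.hyps(2)
  proof
    assume "(u, v) \<in> E2"
    then obtain x' y' where "(x', y') \<in> E1" "(u, v) = (f x', f y')"
      using assms(1) by auto
    then show ?thesis by blast
  next
    assume "(u, v) \<in> E2\<inverse>"
    then obtain x' y' where "(x', y') \<in> E1" "(v, u) = (f x', f y')"
      using assms(1) by auto
    then show ?thesis by blast
  qed
  then obtain x' y' where edge: "(x', y') \<in> E1 \<union> E1\<inverse>" "f x' = u" "f y' = v"
    by blast
  then have "x' \<in> N1" "y' \<in> N1"
    using assms(2) by auto
  then have "(x, y') \<in> reach E1"
    using step.IH edge by (blast intro: rtrancl_into_rtrancl)
  then show ?case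
    using fibres[OF \<open>y' \<in> N1\<close> step.prems(1)] edge(3) step.prems(2) rtrancl_trans by metis
qed

lemma card_quotient_reach_eq:
  assumes nodes: "f ` N1 = N2" "finite N1" "E1 \<subseteq> N1 \<times> N1"
    and edges: "map_prod f f ` E1 \<subseteq> E2 \<union> Id" "E2 \<subseteq> map_prod f f ` E1"
    and fibres: "\<And>x y. x \<in> N1 \<Longrightarrow> y \<in> N1 \<Longrightarrow> f x = f y \<Longrightarrow> (x, y) \<in> reach E1"
  shows "card (N1 // reach E1) = card (N2 // reach E2)"
proof -
  have "reach E1 `` {x} = reach E1 `` {y} \<longleftrightarrow> reach E2 `` {f x} = reach E2 `` {f y}"
    if "x \<in> N1" "y \<in> N1" for x y
    unfolding eq_equiv_class_iff[OF equiv_reach UNIV_I UNIV_I]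
    using reach_map[OF edges(1)] reach_lift[OF edges(2) nodes(3) fibres _ that] by blast
  moreover have "N1 // reach E1 = (\<lambda>x. reach E1 `` {x}) ` N1"
    "N2 // reach E2 = (\<lambda>x. reach E2 `` {f x}) ` N1"
    by (auto simp: quotient_def nodes(1)[symmetric])
  ultimately show ?thesis
    using card_image_eq_if_same_fibres[of N1 "\<lambda>x. reach E1 `` {x}" "\<lambda>x. reach E2 `` {f x}"] by simp
qed

lemma card_quotient_reach_insert_isolated:
  assumes "z \<notin> N" "finite N" "E \<subseteq> N \<times> N"
  shows "card (insert z N // reach E) = Suc (card (N // reach E))"
proof -
  have "(z, y) \<in> reach E \<Longrightarrow> y = z" for y
    by (induction rule: rtrancl_induct) (use assms in auto)
  then have "reach E `` {z} = {z}" by auto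
  then have "insert z N // reach E = insert {z} (N // reach E)"
    by (simp add: quotient_def)
  moreover have "{z} \<notin> N // reach E"
    using assms(1) by (auto simp: quotient_def)
  moreover have "finite (N // reach E)"
    using assms(2) by (simp add: quotient_def)
  ultimately show ?thesis by simp
qed

definition insert_at :: "nat \<Rightarrow> 'a \<Rightarrow> 'a list \<Rightarrow> 'a list" where
  "insert_at p x xs = take p xs @ x # drop p xs"

lemma length_insert_at [simp]: "length (insert_at p x xs) = Suc (length xs)"
  by (simp add: insert_at_def)

lemma set_insert_at [simp]: "p \<le> length xs \<Longrightarrow> set (insert_at p x xs) = insert x (set xs)"
proof -
  have "set xs = set (take p xs) \<union> set (drop p xs)"
    by (metis append_take_drop_id set_append)
  then show ?thesis by (auto simp: insert_at_def)
qed

lemma nth_insert_at: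
  "p \<le> length xs \<Longrightarrow>
   insert_at p x xs ! t = (if t < p then xs ! t else if t = p then x else xs ! (t - 1))"
  by (auto simp: insert_at_def nth_append min_def)

lemma map_insert_at: "map f (insert_at p x xs) = insert_at p (f x) (map f xs)"
  by (simp add: insert_at_def take_map drop_map)

lemma insert_at_inject:
  assumes "p \<le> length xs" "p \<le> length ys" "insert_at p a xs = insert_at p b ys"
  shows "a = b \<and> xs = ys"
proof -
  have "take p xs = take p ys" "drop p xs = drop p ys" "a = b"
    using assms arg_cong[OF assms(3), of "take p"] arg_cong[OF assms(3), of "drop (Suc p)"]
      arg_cong[OF assms(3), of "\<lambda>zs. zs ! p"]
    by (simp_all add: insert_at_def nth_append min_def)
  then show ?thesis
    by (metis append_take_drop_id)
qed

lemma sum_list_insert_at: "sum_list (insert_at p x xs) = sum_list xs + (x :: 'a :: comm_monoid_add)"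
proof -
  have "sum_list xs = sum_list (take p xs) + sum_list (drop p xs)"
    by (metis append_take_drop_id sum_list_append)
  then show ?thesis
    by (simp add: insert_at_def ac_simps)
qed

lemma insert_at_insert_at:
  "p \<le> length xs \<Longrightarrow> insert_at p a (insert_at p b xs) = insert_at (Suc p) b (insert_at p a xs)"
  by (simp add: insert_at_def take_Suc_conv_app_nth min_def)

definition valid_word :: "nat \<Rightarrow> bword \<Rightarrow> bool" where
  "valid_word n w \<longleftrightarrow> (\<forall>l\<in>set w. 1 \<le> fst l \<and> fst l < n)"

lemma valid_word_insert_at:
  "p \<le> length w \<Longrightarrow> valid_word n (insert_at p l w) \<longleftrightarrow> valid_word n w \<and> 1 \<le> fst l \<and> fst l < n"
  by (auto simp: valid_word_def)

definition closing_edges :: "nat \<Rightarrow> nat \<Rightarrow> ((nat \<times> nat) \<times> (nat \<times> nat)) set" where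
  "closing_edges n L = (\<lambda>q. ((L, q), (0, q))) ` {1..n}"

definition tangle_edges :: "nat \<Rightarrow> nat \<Rightarrow> bool \<Rightarrow> nat \<Rightarrow> ((nat \<times> nat) \<times> (nat \<times> nat)) set" where
  "tangle_edges n i b t =
     {((t, q), (Suc t, q)) | q. 1 \<le> q \<and> q \<le> n \<and> (q \<noteq> i \<and> q \<noteq> Suc i \<or> b)}
   \<union> (if b then {} else {((t, i), (t, Suc i)), ((Suc t, i), (Suc t, Suc i))})"

lemma diag_edges_eq:
  "diag_edges n w st =
     closing_edges n (length w) \<union> (\<Union>t<length w. tangle_edges n (fst (w ! t)) (st ! t) t)"
proof -
  have "(\<Union>t<length w. tangle_edges n (fst (w ! t)) (st ! t) t) =
      {((t, p), (Suc t, p)) | t p. t < length w \<and> 1 \<le> p \<and> p \<le> n \<and>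
          (p \<noteq> fst (w ! t) \<and> p \<noteq> Suc (fst (w ! t)) \<or> st ! t)}
   \<union> {((t, fst (w ! t)), (t, Suc (fst (w ! t)))) | t. t < length w \<and> \<not> st ! t}
   \<union> {((Suc t, fst (w ! t)), (Suc t, Suc (fst (w ! t)))) | t. t < length w \<and> \<not> st ! t}"
    unfolding tangle_edges_def by (auto split: if_split_asm)
  moreover have "{((length w, p), (0, p)) | p. 1 \<le> p \<and> p \<le> n} = closing_edges n (length w)"
    by (auto simp: closing_edges_def)
  ultimately show ?thesis
    unfolding diag_edges_def by (simp add: Un_assoc)
qed

lemma mem_diag_nodes [simp]: "(t, q) \<in> diag_nodes n w \<longleftrightarrow> t \<le> length w \<and> 1 \<le> q \<and> q \<le> n"
  by (simp add: diag_nodes_def)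

lemma finite_diag_nodes: "finite (diag_nodes n w)"
  by (rule finite_subset[of _ "{..length w} \<times> {..n}"]) (auto simp: diag_nodes_def)

lemma diag_edges_subset:
  assumes "valid_word n w"
  shows "diag_edges n w st \<subseteq> diag_nodes n w \<times> diag_nodes n w"
proof -
  have "tangle_edges n (fst (w ! t)) (st ! t) t \<subseteq> diag_nodes n w \<times> diag_nodes n w"
    if "t < length w" for t
  proof -
    have "1 \<le> fst (w ! t)" "fst (w ! t) < n"
      using assms nth_mem[OF that] by (auto simp: valid_word_def)
    then show ?thesis
      using that by (auto simp: tangle_edges_def diag_nodes_def split: if_split_asm)
  qed
  moreover have "closing_edges n (length w) \<subseteq> diag_nodes n w \<times> diag_nodes n w"
    by (auto simp: closing_edges_def diag_nodes_def)
  ultimately show ?thesis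
    unfolding diag_edges_eq by blast
qed

lemma diag_edges_cong:
  assumes "map fst w = map fst w'"
  shows "diag_edges n w st = diag_edges n w' st"
proof -
  have len: "length w = length w'"
    using assms by (rule map_eq_imp_length_eq)
  have "fst (w ! t) = fst (w' ! t)" if "t < length w" for t
    using assms that len by (metis nth_map)
  then show ?thesis
    unfolding diag_edges_eq len by (metis (no_types, lifting) SUP_cong lessThan_iff len)
qed

lemma loops_cong:
  assumes "map fst w = map fst w'"
  shows "loops n w st = loops n w' st"
proof -
  have "diag_nodes n w = diag_nodes n w'"
    using map_eq_imp_length_eq[OF assms] by (simp add: diag_nodes_def)
  then show ?thesis
    unfolding loops_def diag_edges_cong[OF assms] by (rule arg_cong)
qed

lemma loops_pos:
  assumes "1 \<le> n"
  shows "1 \<le> loops n w st"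
proof -
  have "(0, 1) \<in> diag_nodes n w"
    using assms by simp
  then have "diag_nodes n w // reach (diag_edges n w st) \<noteq> {}"
    by (auto simp: quotient_def)
  moreover have "finite (diag_nodes n w // reach (diag_edges n w st))"
    using finite_diag_nodes by (simp add: quotient_def)
  ultimately show ?thesis
    unfolding loops_def by (simp add: Suc_le_eq card_gt_0_iff)
qed

definition skip_level :: "nat \<Rightarrow> nat \<Rightarrow> nat" where
  "skip_level p t = (if t < p then t else Suc t)"

lemma diag_edges_insert_at:
  assumes p: "p \<le> length w" and st: "length st = length w"
  shows "diag_edges n (insert_at p l w) (insert_at p b st) =
           closing_edges n (Suc (length w))
         \<union> (\<Union>t<length w. tangle_edges n (fst (w ! t)) (st ! t) (skip_level p t))
         \<union> tangle_edges n (fst l) b p"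
proof -
  have levels: "{..<Suc (length w)} = insert p (skip_level p ` {..<length w})"
  proof (intro equalityI subsetI)
    fix x assume x: "x \<in> {..<Suc (length w)}"
    consider "x < p" | "x = p" | "p < x" by linarith
    then show "x \<in> insert p (skip_level p ` {..<length w})"
    proof cases
      case 1
      then show ?thesis using p by (auto simp: skip_level_def image_iff intro!: bexI[of _ x])
    next
      case 3
      then show ?thesis using x by (auto simp: skip_level_def image_iff intro!: bexI[of _ "x - 1"])
    qed simp
  qed (use p in \<open>auto simp: skip_level_def\<close>)
  have "insert_at p l w ! skip_level p t = w ! t" "insert_at p b st ! skip_level p t = st ! t" for t
    using p st by (simp_all add: nth_insert_at skip_level_def)
  moreover have "insert_at p l w ! p = l" "insert_at p b st ! p = b"
    using p st by (simp_all add: nth_insert_at)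
  ultimately show ?thesis
    unfolding diag_edges_eq length_insert_at levels UN_insert SUP_image comp_def
    by (simp add: Un_ac)
qed

lemma map_tangle_edges:
  assumes "\<And>q. g (s, q) = (t, q)" "\<And>q. g (Suc s, q) = (Suc t, q)"
  shows "map_prod g g ` tangle_edges n i b s = tangle_edges n i b t"
  unfolding tangle_edges_def using assms by (auto simp: image_iff)

definition merge_levels :: "nat \<Rightarrow> nat \<times> nat \<Rightarrow> nat \<times> nat" where
  "merge_levels p = (\<lambda>(t, q). (if t \<le> p then t else t - 1, q))"

lemma map_merge_levels_tangle:
  "map_prod (merge_levels p) (merge_levels p) ` tangle_edges n i b (skip_level p t) = tangle_edges n i b t"
  by (rule map_tangle_edges) (auto simp: merge_levels_def skip_level_def)

lemma map_closing_edges: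
  assumes "\<And>q. g (M, q) = (L, q)" "\<And>q. g (0, q) = (0, q)"
  shows "map_prod g g ` closing_edges n M = closing_edges n L"
  using assms by (simp add: closing_edges_def image_image)

lemma map_merge_levels_closing:
  "p \<le> L \<Longrightarrow> map_prod (merge_levels p) (merge_levels p) ` closing_edges n (Suc L) = closing_edges n L"
  by (rule map_closing_edges) (auto simp: merge_levels_def)

lemma merge_levels_diag_nodes:
  assumes "p \<le> length w"
  shows "merge_levels p ` diag_nodes n (insert_at p l w) = diag_nodes n w"
proof
  show "merge_levels p ` diag_nodes n (insert_at p l w) \<subseteq> diag_nodes n w"
    using assms by (auto simp: merge_levels_def diag_nodes_def)
  show "diag_nodes n w \<subseteq> merge_levels p ` diag_nodes n (insert_at p l w)"
  proof
    fix x assume "x \<in> diag_nodes n w"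
    then obtain t q where "x = (t, q)" "t \<le> length w" "1 \<le> q" "q \<le> n"
      by (auto simp: diag_nodes_def)
    then show "x \<in> merge_levels p ` diag_nodes n (insert_at p l w)"
      by (intro image_eqI[where x = "(skip_level p t, q)"])
        (auto simp: merge_levels_def skip_level_def)
  qed
qed

lemma loops_insert_at_identity:
  assumes p: "p \<le> length w" and st: "length st = length w"
    and valid: "valid_word n (insert_at p l w)"
  shows "loops n (insert_at p l w) (insert_at p True st) = loops n w st"
  unfolding loops_def
proof (rule card_quotient_reach_eq[where f = "merge_levels p"])
  let ?f = "merge_levels p"
  show "finite (diag_nodes n (insert_at p l w))" by (rule finite_diag_nodes)
  show "diag_edges n (insert_at p l w) (insert_at p True st)
      \<subseteq> diag_nodes n (insert_at p l w) \<times> diag_nodes n (insert_at p l w)"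
    using valid by (rule diag_edges_subset)
  show "?f ` diag_nodes n (insert_at p l w) = diag_nodes n w"
    using p by (rule merge_levels_diag_nodes)
  have image: "map_prod ?f ?f ` diag_edges n (insert_at p l w) (insert_at p True st)
      = diag_edges n w st \<union> map_prod ?f ?f ` tangle_edges n (fst l) True p"
    unfolding diag_edges_insert_at[OF p st] image_Un image_UN map_merge_levels_tangle
      map_merge_levels_closing[OF p] diag_edges_eq[of n w st] by blast
  have contracted: "map_prod ?f ?f ` tangle_edges n (fst l) True p \<subseteq> Id"
    by (auto simp: tangle_edges_def merge_levels_def)
  show "map_prod ?f ?f ` diag_edges n (insert_at p l w) (insert_at p True st)
      \<subseteq> diag_edges n w st \<union> Id"
    unfolding image using contracted by blast
  show "diag_edges n w st \<subseteq> map_prod ?f ?f ` diag_edges n (insert_at p l w) (insert_at p True st)"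
    unfolding image by blast
  show "(x, y) \<in> reach (diag_edges n (insert_at p l w) (insert_at p True st))"
    if "x \<in> diag_nodes n (insert_at p l w)" "y \<in> diag_nodes n (insert_at p l w)" "?f x = ?f y" for x y
  proof -
    obtain t q t' q' where xy: "x = (t, q)" "y = (t', q')"
      by fastforce
    then have q: "q' = q" "1 \<le> q" "q \<le> n"
      using that by (auto simp: merge_levels_def)
    have edge: "((p, q), (Suc p, q)) \<in> diag_edges n (insert_at p l w) (insert_at p True st)"
      using q p st by (simp add: diag_edges_insert_at tangle_edges_def)
    have "t = t' \<or> t = p \<and> t' = Suc p \<or> t = Suc p \<and> t' = p"
      using that(3) unfolding xy merge_levels_def by (simp split: if_split_asm; arith)
    then show ?thesis
      using xy q edge by (elim disjE) (simp_all add: r_into_rtrancl)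
  qed
qed

text \<open>Like merge_levels, except that the loop enclosed between two cup-cap tangles on strands
  i, i+1 at levels p and p+1 is sent to (0, 0), which is not a node of any diagram.\<close>

definition merge_cap_levels :: "nat \<Rightarrow> nat \<Rightarrow> nat \<times> nat \<Rightarrow> nat \<times> nat" where
  "merge_cap_levels p i = (\<lambda>(t, q). if t = Suc p then (if q = i \<or> q = Suc i then (0, 0) else (p, q))
                                      else merge_levels p (t, q))"

lemma merge_cap_levels_diag_nodes:
  assumes "p < length w" "1 \<le> i" "i < n"
  shows "merge_cap_levels p i ` diag_nodes n (insert_at p l w) = insert (0, 0) (diag_nodes n w)"
proof
  show "merge_cap_levels p i ` diag_nodes n (insert_at p l w) \<subseteq> insert (0, 0) (diag_nodes n w)"
    using assms by (auto simp: merge_cap_levels_def merge_levels_def diag_nodes_def split: if_split_asm)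
  show "insert (0, 0) (diag_nodes n w) \<subseteq> merge_cap_levels p i ` diag_nodes n (insert_at p l w)"
  proof
    fix x assume "x \<in> insert (0, 0) (diag_nodes n w)"
    then consider "x = (0, 0)" | t q where "x = (t, q)" "t \<le> length w" "1 \<le> q" "q \<le> n"
      by (auto simp: diag_nodes_def)
    then show "x \<in> merge_cap_levels p i ` diag_nodes n (insert_at p l w)"
    proof cases
      case 1
      then show ?thesis
        using assms by (intro image_eqI[where x = "(Suc p, i)"]) (auto simp: merge_cap_levels_def)
    next
      case 2
      then show ?thesis
        by (intro image_eqI[where x = "(if t \<le> p then t else Suc t, q)"])
          (auto simp: merge_cap_levels_def merge_levels_def)
    qed
  qed
qed

lemma map_merge_cap_levels_caps:
  fixes n p i :: nat
  defines "f \<equiv> merge_cap_levels p i"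
    and "C \<equiv> tangle_edges n i False (Suc p) \<union> tangle_edges n i False p"
  shows "map_prod f f ` C \<subseteq> tangle_edges n i False p \<union> Id"
    and "tangle_edges n i False p \<subseteq> map_prod f f ` C"
proof -
  show "map_prod f f ` C \<subseteq> tangle_edges n i False p \<union> Id"
    unfolding C_def by (auto simp: tangle_edges_def f_def merge_cap_levels_def merge_levels_def)
  show "tangle_edges n i False p \<subseteq> map_prod f f ` C"
  proof
    fix e assume "e \<in> tangle_edges n i False p"
    then consider (vertical) q where "e = ((p, q), (Suc p, q))" "1 \<le> q" "q \<le> n" "q \<noteq> i" "q \<noteq> Suc i"
      | (upper) "e = ((p, i), (p, Suc i))" | (lower) "e = ((Suc p, i), (Suc p, Suc i))"
      unfolding tangle_edges_def by auto
    then show "e \<in> map_prod f f ` C"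
    proof cases
      case vertical
      then show ?thesis
        by (intro image_eqI[where x = "((Suc p, q), (Suc (Suc p), q))"])
          (auto simp: C_def tangle_edges_def f_def merge_cap_levels_def merge_levels_def)
    next
      case upper
      then show ?thesis
        by (intro image_eqI[where x = e])
          (auto simp: C_def tangle_edges_def f_def merge_cap_levels_def merge_levels_def)
    next
      case lower
      then show ?thesis
        by (intro image_eqI[where x = "((Suc (Suc p), i), (Suc (Suc p), Suc i))"])
          (auto simp: C_def tangle_edges_def f_def merge_cap_levels_def merge_levels_def)
    qed
  qed
qed

lemma merge_cap_levels_eq_cases:
  assumes "merge_cap_levels p i (t, q) = merge_cap_levels p i (t', q')" "1 \<le> q" "1 \<le> q'"
  shows "(t, q) = (t', q')
    \<or> q = q' \<and> q \<noteq> i \<and> q \<noteq> Suc i \<and> (t = p \<and> t' = Suc p \<or> t = Suc p \<and> t' = p)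
    \<or> t = Suc p \<and> t' = Suc p \<and> (q = i \<or> q = Suc i) \<and> (q' = i \<or> q' = Suc i)"
  using assms unfolding merge_cap_levels_def merge_levels_def by (simp split: if_split_asm; arith)

lemma loops_insert_at_cup_cap:
  assumes p: "p < length w" and st: "length st = length w"
    and valid: "valid_word n (insert_at p l w)"
    and same_strands: "fst l = fst (w ! p)" and cup_cap: "\<not> st ! p"
  shows "loops n (insert_at p l w) (insert_at p False st) = Suc (loops n w st)"
proof -
  define i where "i = fst l"
  define f where "f = merge_cap_levels p i"
  define C where "C = tangle_edges n i False (Suc p) \<union> tangle_edges n i False p"
  let ?E1 = "diag_edges n (insert_at p l w) (insert_at p False st)"
  let ?T = "\<lambda>s t. tangle_edges n (fst (w ! t)) (st ! t) s"
  have valid_w: "valid_word n w" and i: "1 \<le> i" "i < n"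
    using valid p by (simp_all add: valid_word_def i_def)
  have split: "(\<Union>t<length w. F t) = F p \<union> (\<Union>t\<in>{..<length w} - {p}. F t)"
    for F :: "nat \<Rightarrow> ((nat \<times> nat) \<times> (nat \<times> nat)) set"
    using p by blast
  have Tp: "?T s p = tangle_edges n i False s" for s
    using same_strands cup_cap by (simp add: i_def)
  have E1: "?E1 = closing_edges n (Suc (length w)) \<union> (\<Union>t\<in>{..<length w} - {p}. ?T (skip_level p t) t) \<union> C"
    using p st unfolding C_def diag_edges_insert_at[OF less_imp_le[OF p] st] split
    by (simp add: Tp skip_level_def i_def Un_ac)
  have E2: "diag_edges n w st = closing_edges n (length w)
      \<union> (\<Union>t\<in>{..<length w} - {p}. ?T t t) \<union> tangle_edges n i False p"
    unfolding diag_edges_eq split[of "\<lambda>t. ?T t t"] Tp by (simp add: Un_ac)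
  have "map_prod f f ` closing_edges n (Suc (length w)) = closing_edges n (length w)"
    using p by (intro map_closing_edges) (auto simp: f_def merge_cap_levels_def merge_levels_def)
  moreover have "map_prod f f ` ?T (skip_level p t) t = ?T t t" if "t \<noteq> p" for t
    using that
    by (intro map_tangle_edges) (auto simp: f_def merge_cap_levels_def merge_levels_def skip_level_def)
  ultimately have image: "map_prod f f ` ?E1 = closing_edges n (length w)
      \<union> (\<Union>t\<in>{..<length w} - {p}. ?T t t) \<union> map_prod f f ` C"
    unfolding E1 image_Un image_UN by simp
  have "card (diag_nodes n (insert_at p l w) // reach ?E1)
      = card (insert (0, 0) (diag_nodes n w) // reach (diag_edges n w st))"
  proof (rule card_quotient_reach_eq[where f = f])
    show "finite (diag_nodes n (insert_at p l w))"
      by (rule finite_diag_nodes)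
    show "?E1 \<subseteq> diag_nodes n (insert_at p l w) \<times> diag_nodes n (insert_at p l w)"
      using valid by (rule diag_edges_subset)
    show "f ` diag_nodes n (insert_at p l w) = insert (0, 0) (diag_nodes n w)"
      unfolding f_def using p i by (rule merge_cap_levels_diag_nodes)
    show "map_prod f f ` ?E1 \<subseteq> diag_edges n w st \<union> Id"
      unfolding image E2 using map_merge_cap_levels_caps(1)[of p i n] by (auto simp: f_def C_def)
    show "diag_edges n w st \<subseteq> map_prod f f ` ?E1"
      unfolding image E2 using map_merge_cap_levels_caps(2)[of n i p] by (auto simp: f_def C_def)
    show "(x, y) \<in> reach ?E1"
      if "x \<in> diag_nodes n (insert_at p l w)" "y \<in> diag_nodes n (insert_at p l w)" "f x = f y" for x y
    proof -
      obtain t q t' q' where xy: "x = (t, q)" "y = (t', q')"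
        by fastforce
      have "((p, q), (Suc p, q)) \<in> ?E1" if "q \<noteq> i" "q \<noteq> Suc i" "1 \<le> q" "q \<le> n" for q
        using that unfolding E1 C_def by (auto simp: tangle_edges_def)
      moreover have "((Suc p, i), (Suc p, Suc i)) \<in> ?E1"
        unfolding E1 C_def by (auto simp: tangle_edges_def)
      ultimately show ?thesis
        using merge_cap_levels_eq_cases[of p i t q t' q'] that xy
        by (auto simp: f_def intro: r_into_rtrancl)
    qed
  qed
  also have "\<dots> = Suc (loops n w st)"
    unfolding loops_def using valid_w
    by (intro card_quotient_reach_insert_isolated finite_diag_nodes diag_edges_subset) simp_all
  finally show ?thesis
    unfolding loops_def .
qed

lemma loops_insert_at_below_cup_cap:
  assumes p: "p \<le> length w" and st: "length st = length w"
    and valid: "valid_word n (insert_at p (i, e) w)"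
  shows "loops n (insert_at p (i, 0) (insert_at p (i, e) w)) (insert_at p False (insert_at p True st))
      = loops n (insert_at p (i, 0) w) (insert_at p False st)"
    and "loops n (insert_at p (i, 0) (insert_at p (i, e) w)) (insert_at p False (insert_at p False st))
      = Suc (loops n (insert_at p (i, 0) w) (insert_at p False st))"
proof -
  have valid0: "valid_word n (insert_at p (i, 0) w)"
    using valid p by (simp add: valid_word_insert_at)
  have "loops n (insert_at p (i, 0) (insert_at p (i, e) w)) (insert_at p False (insert_at p True st))
      = loops n (insert_at (Suc p) (i, e) (insert_at p (i, 0) w)) (insert_at (Suc p) True (insert_at p False st))"
    using p st by (simp add: insert_at_insert_at)
  also have "\<dots> = loops n (insert_at p (i, 0) w) (insert_at p False st)"
    using p st valid0 valid by (intro loops_insert_at_identity) (simp_all add: valid_word_insert_at)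
  finally show "loops n (insert_at p (i, 0) (insert_at p (i, e) w)) (insert_at p False (insert_at p True st))
      = loops n (insert_at p (i, 0) w) (insert_at p False st)" .
  have "loops n (insert_at p (i, 0) (insert_at p (i, e) w)) (insert_at p False (insert_at p False st))
      = Suc (loops n (insert_at p (i, e) w) (insert_at p False st))"
    using p st valid by (intro loops_insert_at_cup_cap) (simp_all add: valid_word_insert_at nth_insert_at)
  also have "loops n (insert_at p (i, e) w) (insert_at p False st) = loops n (insert_at p (i, 0) w) (insert_at p False st)"
    by (rule loops_cong) (simp add: map_insert_at)
  finally show "loops n (insert_at p (i, 0) (insert_at p (i, e) w)) (insert_at p False (insert_at p False st))
      = Suc (loops n (insert_at p (i, 0) w) (insert_at p False st))" .
qed

definition Apow :: "int \<Rightarrow> int fls" where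
  "Apow k = fls_X_intpow k"

lemma Apow_mult: "Apow a * Apow b = Apow (a + b)"
  unfolding Apow_def by (rule fls_X_intpow_times_fls_X_intpow)

lemma Apow_power: "Apow a ^ k = Apow (int k * a)"
  unfolding Apow_def by (rule fls_X_intpow_power)

lemma Apow_0 [simp]: "Apow 0 = 1"
  by (simp add: Apow_def)

lemma Apow_nth [simp]: "Apow k $$ m = (if m = k then 1 else 0)"
  by (simp add: Apow_def)

lemma Apow_times_nth [simp]: "(Apow k * f) $$ m = f $$ (m - k)"
  by (simp add: Apow_def fls_X_intpow_times_conv_shift)

definition loop_factor :: "int fls" where
  "loop_factor = - Apow 2 - Apow (-2)"

lemma loop_factor_power_nth:
  "(loop_factor ^ k) $$ m = (\<Sum>j\<le>k. if 4 * int j - 2 * int k = m then (-1) ^ k * int (k choose j) else 0)"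
proof -
  have sign: "fls_const ((-1::int) ^ k) = (-1) ^ k"
    unfolding fls_const_power by simp
  have "loop_factor ^ k = fls_const ((-1) ^ k) * (Apow 2 + Apow (-2)) ^ k"
    unfolding sign loop_factor_def by (simp add: power_minus[symmetric])
  also have "(Apow 2 + Apow (-2)) ^ k = (\<Sum>j\<le>k. of_nat (k choose j) * Apow (4 * int j - 2 * int k))"
    unfolding binomial_ring
  proof (rule sum.cong[OF refl])
    fix j assume "j \<in> {..k}"
    then have "Apow 2 ^ j * Apow (-2) ^ (k - j) = Apow (4 * int j - 2 * int k)"
      unfolding Apow_power Apow_mult by (simp add: of_nat_diff algebra_simps)
    then show "of_nat (k choose j) * Apow 2 ^ j * Apow (-2) ^ (k - j) =
        of_nat (k choose j) * Apow (4 * int j - 2 * int k)"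
      by (simp add: mult.assoc)
  qed
  finally show ?thesis
    by (simp add: fls_nth_sum sum_distrib_left fls_of_nat mult.assoc[symmetric]) (intro sum.cong; auto)
qed

definition bracket :: "nat \<Rightarrow> bword \<Rightarrow> int fls" where
  "bracket n w = (\<Sum>st | length st = length w. Apow (state_exp w st) * loop_factor ^ (loops n w st - 1))"

lemma bracket_nth: "bracket n w $$ m = bracket_coeff n w m"
  unfolding bracket_def bracket_coeff_def Let_def fls_nth_sum Apow_times_nth loop_factor_power_nth
  by (intro sum.cong refl) auto

lemma finite_states: "finite {st :: bool list. length st = L}"
  using finite_lists_length_eq[of "UNIV :: bool set" L] by simp

lemma card_states: "card {st :: bool list. length st = L} = 2 ^ L"
  using card_lists_length_eq[of "UNIV :: bool set" L] by (simp add: card_UNIV_bool)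

lemma sum_states_insert_at:
  assumes "p \<le> L"
  shows "(\<Sum>st | length st = Suc L. g st) =
         (\<Sum>st | length st = L. g (insert_at p True st) + g (insert_at p False st))"
proof -
  let ?S = "{st :: bool list. length st = L}"
  let ?ins = "\<lambda>(st, b). insert_at p b st"
  have states: "{st. length st = Suc L} = ?ins ` (?S \<times> UNIV)"
  proof (intro equalityI subsetI)
    fix ys :: "bool list" assume "ys \<in> {st. length st = Suc L}"
    then have "ys = insert_at p (ys ! p) (take p ys @ drop (Suc p) ys)"
      "length (take p ys @ drop (Suc p) ys) = L"
      using assms by (simp_all add: insert_at_def id_take_nth_drop[symmetric] min_def)
    then show "ys \<in> ?ins ` (?S \<times> UNIV)"
      by (intro image_eqI[where x = "(take p ys @ drop (Suc p) ys, ys ! p)"]) auto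
  qed auto
  have inj: "inj_on ?ins (?S \<times> UNIV)"
  proof (rule inj_onI)
    fix x y assume "x \<in> ?S \<times> UNIV" "y \<in> ?S \<times> UNIV" "?ins x = ?ins y"
    then show "x = y"
      using insert_at_inject[of p "fst x" "fst y" "snd x" "snd y"] assms by (cases x; cases y) auto
  qed
  have "(\<Sum>st | length st = Suc L. g st) = (\<Sum>x\<in>?S \<times> UNIV. g (?ins x))"
    unfolding states by (rule sum.reindex[OF inj, unfolded comp_def])
  also have "\<dots> = (\<Sum>st\<in>?S. g (insert_at p True st) + g (insert_at p False st))"
    unfolding prod.case_distrib sum.cartesian_product[symmetric] by (simp add: UNIV_bool add.commute)
  finally show ?thesis .
qed

lemma state_exp_insert_at:
  assumes "p \<le> length w" "length st = length w"
  shows "state_exp (insert_at p l w) (insert_at p b st) = state_exp w st + (if b then - snd l else snd l)"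
proof -
  have "state_exp v s = sum_list (map (\<lambda>(l, b). if b then - snd l else snd l) (zip v s))"
    if "length s = length v" for v :: bword and s
    using that unfolding state_exp_def by (simp add: sum_list_sum_nth atLeast0LessThan)
  moreover have "zip (insert_at p l w) (insert_at p b st) = insert_at p (l, b) (zip w st)"
    using assms by (simp add: insert_at_def take_zip drop_zip)
  ultimately show ?thesis
    using assms by (simp add: map_insert_at sum_list_insert_at)
qed

text \<open>The bracket of w with a cup-cap tangle on strands i, i+1 inserted at position p;
  the exponent 0 of the inserted letter is a placeholder, since loops ignore exponents.\<close>

definition cup_cap_bracket :: "nat \<Rightarrow> nat \<Rightarrow> nat \<Rightarrow> bword \<Rightarrow> int fls" where
  "cup_cap_bracket n p i w = (\<Sum>st | length st = length w.
     Apow (state_exp w st) * loop_factor ^ (loops n (insert_at p (i, 0) w) (insert_at p False st) - 1))"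

lemma bracket_insert_at:
  assumes p: "p \<le> length w" and valid: "valid_word n (insert_at p l w)"
  shows "bracket n (insert_at p l w) = Apow (- snd l) * bracket n w + Apow (snd l) * cup_cap_bracket n p (fst l) w"
proof -
  define F where "F b st = Apow (state_exp (insert_at p l w) (insert_at p b st))
      * loop_factor ^ (loops n (insert_at p l w) (insert_at p b st) - 1)" for b st
  have "F True st = Apow (- snd l) * (Apow (state_exp w st) * loop_factor ^ (loops n w st - 1))"
    and "F False st = Apow (snd l) * (Apow (state_exp w st)
      * loop_factor ^ (loops n (insert_at p (fst l, 0) w) (insert_at p False st) - 1))"
    if st: "length st = length w" for st
  proof -
    have "Apow (a + c) = Apow c * Apow a" for a c
      by (simp only: Apow_mult add.commute)
    moreover have "loops n (insert_at p l w) (insert_at p False st)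
        = loops n (insert_at p (fst l, 0) w) (insert_at p False st)"
      by (rule loops_cong) (simp add: map_insert_at)
    ultimately show "F True st = Apow (- snd l) * (Apow (state_exp w st) * loop_factor ^ (loops n w st - 1))"
      and "F False st = Apow (snd l) * (Apow (state_exp w st)
        * loop_factor ^ (loops n (insert_at p (fst l, 0) w) (insert_at p False st) - 1))"
      unfolding F_def state_exp_insert_at[OF p st] loops_insert_at_identity[OF p st valid]
      by (simp_all only: if_True if_False mult.assoc)
  qed
  moreover have "bracket n (insert_at p l w) = (\<Sum>st | length st = length w. F True st + F False st)"
    unfolding bracket_def F_def length_insert_at using p by (rule sum_states_insert_at)
  ultimately show ?thesis
    unfolding bracket_def cup_cap_bracket_def by (simp add: sum.distrib sum_distrib_left)
qed

lemma cup_cap_bracket_insert_at: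
  assumes p: "p \<le> length w" and valid: "valid_word n (insert_at p (i, e) w)"
  shows "cup_cap_bracket n p i (insert_at p (i, e) w) = (Apow (- e) + Apow e * loop_factor) * cup_cap_bracket n p i w"
proof -
  let ?w0 = "insert_at p (i, 0) w" and ?we = "insert_at p (i, e) w"
  define F where "F b st = Apow (state_exp ?we (insert_at p b st))
      * loop_factor ^ (loops n (insert_at p (i, 0) ?we) (insert_at p False (insert_at p b st)) - 1)" for b st
  define G where "G st = Apow (state_exp w st) * loop_factor ^ (loops n ?w0 (insert_at p False st) - 1)" for st
  have n: "1 \<le> n"
    using valid p by (simp add: valid_word_insert_at)
  have "F True st = Apow (- e) * G st" and "F False st = Apow e * loop_factor * G st"
    if st: "length st = length w" for st
  proof -
    have "loop_factor ^ (Suc K - 1) = loop_factor * loop_factor ^ (K - 1)" if "1 \<le> K" for K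
      using that by (cases K) auto
    moreover have "Apow (a + c) = Apow c * Apow a" for a c
      by (simp only: Apow_mult add.commute)
    ultimately show "F True st = Apow (- e) * G st" and "F False st = Apow e * loop_factor * G st"
      unfolding F_def G_def state_exp_insert_at[OF p st] loops_insert_at_below_cup_cap[OF p st valid]
      using loops_pos[OF n] by (simp_all only: if_True if_False snd_conv ac_simps)
  qed
  moreover have "cup_cap_bracket n p i ?we = (\<Sum>st | length st = length w. F True st + F False st)"
    unfolding cup_cap_bracket_def F_def length_insert_at using p by (rule sum_states_insert_at)
  ultimately show ?thesis
    unfolding cup_cap_bracket_def G_def by (simp add: sum.distrib sum_distrib_left algebra_simps)
qed

lemma gen_power_succ: "0 \<le> x \<Longrightarrow> gen_power i (x + 1) = (i, 1) # gen_power i x"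
  by (cases "x = 0") (simp_all add: gen_power_def nat_add_distrib)

lemma gen_power_neg:
  assumes "x < 0"
  shows "gen_power i x = (i, -1) # gen_power i (x + 1)"
proof -
  have "nat \<bar>x\<bar> = Suc (nat \<bar>x + 1\<bar>)" "x + 1 \<noteq> 0 \<Longrightarrow> sgn (x + 1) = -1"
    using assms by simp_all
  then show ?thesis
    using assms by (cases "x = -1") (simp_all add: gen_power_def)
qed

lemma set_gen_power: "set (gen_power i x) \<subseteq> {(i, sgn x)}"
  by (auto simp: gen_power_def)

lemma power_word_succ:
  "0 \<le> x \<Longrightarrow> \<alpha> @ gen_power i (x + 1) @ \<gamma> = insert_at (length \<alpha>) (i, 1) (\<alpha> @ gen_power i x @ \<gamma>)"
  by (simp add: insert_at_def gen_power_succ)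

lemma power_word_neg:
  "x < 0 \<Longrightarrow> \<alpha> @ gen_power i x @ \<gamma> = insert_at (length \<alpha>) (i, -1) (\<alpha> @ gen_power i (x + 1) @ \<gamma>)"
  by (simp add: insert_at_def gen_power_neg[of x])

lemma valid_power_word:
  "valid_word n (\<alpha> @ \<gamma>) \<Longrightarrow> 1 \<le> i \<Longrightarrow> i < n \<Longrightarrow> valid_word n (\<alpha> @ gen_power i x @ \<gamma>)"
  using set_gen_power[of i x] by (auto simp: valid_word_def)

lemma Apow_relations:
  "Apow 1 * Apow (-1) = 1" "Apow 2 = Apow 1 ^ 2" "Apow 3 = Apow 1 ^ 3"
  "loop_factor = - (Apow 1 ^ 2) - Apow (-1) ^ 2"
  by (simp_all add: Apow_mult Apow_power loop_factor_def)

text \<open>A crossing stacked on a cup-cap tangle on the same strands is a kink.\<close>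

lemma cup_cap_bracket_power_step:
  assumes "valid_word n (\<alpha> @ \<gamma>)" "1 \<le> i" "i < n"
  defines "c \<equiv> \<lambda>x. cup_cap_bracket n (length \<alpha>) i (\<alpha> @ gen_power i x @ \<gamma>)"
  shows "c (x + 1) = - (Apow 1 ^ 3) * c x"
proof (cases "0 \<le> x")
  case True
  have "c (x + 1) = (Apow (-1) + Apow 1 * loop_factor) * c x"
    unfolding c_def power_word_succ[OF True]
    using assms valid_power_word[of n \<alpha> \<gamma> i "x + 1"] power_word_succ[OF True]
    by (subst cup_cap_bracket_insert_at) simp_all
  then show ?thesis
    using Apow_relations by algebra
next
  case False
  then have x: "x < 0" by simp
  have "c x = (Apow 1 + Apow (-1) * loop_factor) * c (x + 1)"
    unfolding c_def power_word_neg[OF x]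
    using assms valid_power_word[of n \<alpha> \<gamma> i x] power_word_neg[OF x]
    by (subst cup_cap_bracket_insert_at) simp_all
  then show ?thesis
    using Apow_relations by algebra
qed

lemma bracket_power_step:
  assumes valid: "valid_word n (\<alpha> @ \<gamma>)" and i: "1 \<le> i" "i < n"
  defines "b \<equiv> \<lambda>x. bracket n (\<alpha> @ gen_power i x @ \<gamma>)"
    and "c \<equiv> \<lambda>x. cup_cap_bracket n (length \<alpha>) i (\<alpha> @ gen_power i x @ \<gamma>)"
  shows "b (x + 1) = Apow (-1) * b x + Apow 1 * c x"
proof (cases "0 \<le> x")
  case True
  show ?thesis
    unfolding b_def c_def power_word_succ[OF True]
    using valid_power_word[OF valid i, of "x + 1"] power_word_succ[OF True]
    by (subst bracket_insert_at) simp_all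
next
  case False
  then have x: "x < 0" by simp
  have "b x = Apow 1 * b (x + 1) + Apow (-1) * c (x + 1)"
    unfolding b_def c_def power_word_neg[OF x]
    using valid_power_word[OF valid i, of x] power_word_neg[OF x]
    by (subst bracket_insert_at) simp_all
  then show ?thesis
    using Apow_relations cup_cap_bracket_power_step[OF valid i, of x] unfolding c_def by algebra
qed

lemma bracket_power_recurrence:
  assumes valid: "valid_word n (\<alpha> @ \<gamma>)" and i: "1 \<le> i" "i < n"
  defines "b \<equiv> \<lambda>x. bracket n (\<alpha> @ gen_power i x @ \<gamma>)"
  shows "b (x + 2) = (Apow (-1) - Apow 3) * b (x + 1) + Apow 2 * b x"
  using bracket_power_step[OF valid i, of "x + 1"] bracket_power_step[OF valid i, of x]
    cup_cap_bracket_power_step[OF valid i, of x] Apow_relations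
  unfolding b_def by (simp add: add.assoc) algebra

definition bracket_exponents :: "nat \<Rightarrow> bword \<Rightarrow> int set" where
  "bracket_exponents n w = (\<Union>st\<in>{st. length st = length w}.
      (\<lambda>j. state_exp w st + 4 * int j - 2 * int (loops n w st - 1)) ` {..loops n w st - 1})"

lemma finite_bracket_exponents: "finite (bracket_exponents n w)"
  unfolding bracket_exponents_def using finite_states by auto

lemma bracket_coeff_eq_0:
  assumes "m \<notin> bracket_exponents n w"
  shows "bracket_coeff n w m = 0"
  using assms unfolding bracket_coeff_def bracket_exponents_def Let_def
  by (intro sum.neutral ballI) auto

lemma sum_bracket_coeff:
  "(\<Sum>m\<in>bracket_exponents n w. bracket_coeff n w m) = (\<Sum>st | length st = length w. (-2) ^ (loops n w st - 1))"
proof -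
  let ?k = "\<lambda>st. loops n w st - 1"
  let ?e = "\<lambda>st j. state_exp w st + 4 * int j - 2 * int (?k st)"
  have "(\<Sum>m\<in>bracket_exponents n w. bracket_coeff n w m) =
     (\<Sum>st | length st = length w. \<Sum>j\<le>?k st. \<Sum>m\<in>bracket_exponents n w.
        if ?e st j = m then (-1) ^ ?k st * int (?k st choose j) else 0)"
    unfolding bracket_coeff_def Let_def by (subst sum.swap) (simp add: sum.swap[of _ "bracket_exponents n w"])
  also have "\<dots> = (\<Sum>st | length st = length w. \<Sum>j\<le>?k st. (-1) ^ ?k st * int (?k st choose j))"
  proof (intro sum.cong refl)
    fix st j assume "st \<in> {st. length st = length w}" "j \<in> {..?k st}"
    then have "?e st j \<in> bracket_exponents n w"
      unfolding bracket_exponents_def by blast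
    then show "(\<Sum>m\<in>bracket_exponents n w. if ?e st j = m then (-1) ^ ?k st * int (?k st choose j) else 0)
        = (-1) ^ ?k st * int (?k st choose j)"
      using finite_bracket_exponents by simp
  qed
  also have "\<dots> = (\<Sum>st | length st = length w. (-2) ^ ?k st)"
  proof (intro sum.cong refl)
    fix st
    have "(\<Sum>j\<le>?k st. int (?k st choose j)) = 2 ^ ?k st"
      by (simp flip: of_nat_sum add: choose_row_sum)
    then show "(\<Sum>j\<le>?k st. (-1) ^ ?k st * int (?k st choose j)) = (-2) ^ ?k st"
      by (simp flip: sum_distrib_left add: power_mult_distrib[symmetric])
  qed
  finally show ?thesis .
qed

lemma three_not_dvd_power_two: "\<not> (3 :: int) dvd 2 ^ L"
proof
  assume "(3 :: int) dvd 2 ^ L"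
  moreover have "prime (3 :: int)" by simp
  ultimately have "(3 :: int) dvd 2"
    by (rule prime_dvd_power[rotated])
  then show False by simp
qed

text \<open>At A = 1 every state contributes (-2)^k, which is 1 modulo 3, so the coefficients of the
  bracket add up to the number of states 2^L, which is not divisible by 3.\<close>

lemma bracket_coeff_nonzero: "\<exists>m. bracket_coeff n w m \<noteq> 0"
proof (rule ccontr)
  assume "\<not> ?thesis"
  then have "(\<Sum>st | length st = length w. (-2 :: int) ^ (loops n w st - 1)) mod 3 = 0"
    using sum_bracket_coeff[of n w] by simp
  moreover have "(\<Sum>st | length st = length w. (-2 :: int) ^ (loops n w st - 1)) mod 3
      = (\<Sum>st | length st = length w. (-2 :: int) ^ (loops n w st - 1) mod 3) mod 3"
    by (simp add: mod_sum_eq)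
  moreover have "(-2 :: int) ^ k mod 3 = 1" for k
    using power_mod[of "-2 :: int" 3 k] by simp
  moreover have "(2 :: int) ^ L mod 3 \<noteq> 0" for L
    using three_not_dvd_power_two by presburger
  ultimately show False
    using card_states[of "length w"] by simp
qed

definition unit_exponents :: "bword \<Rightarrow> bool" where
  "unit_exponents w \<longleftrightarrow> (\<forall>l\<in>set w. snd l = 1 \<or> snd l = -1)"

lemma even_sum_odd_plus_card:
  assumes "\<And>t. t < L \<Longrightarrow> odd (f t :: int)"
  shows "even (sum f {..<L} + int L)"
proof -
  have "{t \<in> {..<L}. odd (f t)} = {..<L}"
    using assms by auto
  then show ?thesis
    by (simp add: even_sum_iff)
qed

lemma bracket_coeff_parity:
  assumes "unit_exponents w" "bracket_coeff n w m \<noteq> 0"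
  shows "even (m + int (length w))"
proof -
  obtain st j where "length st = length w" "m = state_exp w st + 4 * int j - 2 * int (loops n w st - 1)"
    using assms(2) bracket_coeff_eq_0[of m n w] unfolding bracket_exponents_def by blast
  moreover have "even (state_exp w st + int (length w))" for st
    unfolding state_exp_def using assms(1)
    by (intro even_sum_odd_plus_card) (auto simp: unit_exponents_def dest!: nth_mem)
  ultimately show ?thesis
    by simp
qed

definition exponent_sum :: "bword \<Rightarrow> int" where
  "exponent_sum w = sum_list (map snd w)"

lemma exponent_sum_eq: "exponent_sum w = (\<Sum>t<length w. snd (w ! t))"
  by (simp add: exponent_sum_def sum_list_sum_nth atLeast0LessThan)

lemma exponent_sum_parity: "unit_exponents w \<Longrightarrow> even (exponent_sum w + int (length w))"
  unfolding exponent_sum_eq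
  by (intro even_sum_odd_plus_card) (auto simp: unit_exponents_def dest!: nth_mem)

lemma exponent_sum_gen_power: "exponent_sum (gen_power i x) = x"
  by (simp add: exponent_sum_def gen_power_def sum_list_replicate abs_mult_sgn)

lemma exponent_sum_append: "exponent_sum (u @ v) = exponent_sum u + exponent_sum v"
  by (simp add: exponent_sum_def)

lemma jones_eq: "jones n w k = (-1) ^ nat \<bar>exponent_sum w\<bar> * bracket_coeff n w (2 * k - 3 * exponent_sum w)"
  unfolding jones_def fpoly_coeff_def exponent_sum_eq Let_def ..

lemma finite_jones_support: "finite {k. jones n w k \<noteq> 0}"
proof (rule finite_surj[OF finite_bracket_exponents])
  show "{k. jones n w k \<noteq> 0} \<subseteq> (\<lambda>m. (m + 3 * exponent_sum w) div 2) ` bracket_exponents n w"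
  proof
    fix k assume "k \<in> {k. jones n w k \<noteq> 0}"
    then have "2 * k - 3 * exponent_sum w \<in> bracket_exponents n w"
      using bracket_coeff_eq_0 by (auto simp: jones_eq)
    then show "k \<in> (\<lambda>m. (m + 3 * exponent_sum w) div 2) ` bracket_exponents n w"
      by (intro image_eqI[where x = "2 * k - 3 * exponent_sum w"]) auto
  qed
qed

lemma jones_nonzero:
  assumes "unit_exponents w"
  shows "\<exists>k. jones n w k \<noteq> 0"
proof -
  obtain m where m: "bracket_coeff n w m \<noteq> 0"
    using bracket_coeff_nonzero by blast
  have "even (m + 3 * exponent_sum w)"
    using bracket_coeff_parity[OF assms m] exponent_sum_parity[OF assms] by presburger
  then have "2 * ((m + 3 * exponent_sum w) div 2) - 3 * exponent_sum w = m"
    by simp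
  then have "jones n w ((m + 3 * exponent_sum w) div 2) \<noteq> 0"
    using m by (simp add: jones_eq)
  then show ?thesis by blast
qed

lemma minus_one_power_nat_abs_succ: "(-1 :: int) ^ nat \<bar>z + 1\<bar> = - ((-1) ^ nat \<bar>z\<bar>)"
proof -
  have "(-1 :: int) ^ nat \<bar>z\<bar> = (if even z then 1 else -1)" for z :: int
    by (simp add: minus_one_power_iff even_nat_iff)
  then show ?thesis by simp
qed

lemma jones_power_recurrence:
  assumes valid: "valid_word n (\<alpha> @ \<gamma>)" and i: "1 \<le> i" "i < n"
  defines "V \<equiv> \<lambda>x. jones n (\<alpha> @ gen_power i x @ \<gamma>)"
  shows "V (x + 2) k = - V (x + 1) (k - 1) + V (x + 1) (k - 3) + V x (k - 4)"
proof -
  define B where "B = (\<lambda>x. bracket_coeff n (\<alpha> @ gen_power i x @ \<gamma>))"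
  define E where "E = exponent_sum \<alpha> + x + exponent_sum \<gamma>"
  have B: "B (x + 2) m = B (x + 1) (m + 1) - B (x + 1) (m - 3) + B x (m - 2)" for m
    using arg_cong[OF bracket_power_recurrence[OF valid i, of x], of "\<lambda>f. f $$ m"]
    by (simp add: B_def bracket_nth[symmetric] left_diff_distrib)
  have V: "V y k = (-1) ^ nat \<bar>E + (y - x)\<bar> * B y (2 * k - 3 * (E + (y - x)))" for y k
    by (simp add: V_def B_def E_def jones_eq exponent_sum_append exponent_sum_gen_power ac_simps)
  have signs: "(-1 :: int) ^ nat \<bar>E + 1\<bar> = - ((-1) ^ nat \<bar>E\<bar>)"
    "(-1 :: int) ^ nat \<bar>E + 2\<bar> = (-1) ^ nat \<bar>E\<bar>"
    using minus_one_power_nat_abs_succ[of E] minus_one_power_nat_abs_succ[of "E + 1"]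
    by (simp_all add: add.assoc)
  have "2 * k - 3 * (E + 2) + 1 = 2 * (k - 1) - 3 * (E + 1)"
    "2 * k - 3 * (E + 2) - 3 = 2 * (k - 3) - 3 * (E + 1)"
    "2 * k - 3 * (E + 2) - 2 = 2 * (k - 4) - 3 * E"
    by simp_all
  then show ?thesis
    unfolding V by (simp add: signs B algebra_simps)
qed

lemma ldeg_nonzero:
  assumes "finite {k. c k \<noteq> 0}" "\<exists>k. c k \<noteq> 0"
  shows "c (ldeg c) \<noteq> 0"
  using Max_in[OF assms(1)] assms(2) unfolding ldeg_def by auto

lemma coeff_above_ldeg:
  assumes "finite {k. c k \<noteq> 0}" "ldeg c < k"
  shows "c k = 0"
  using Max_ge[OF assms(1), of k] assms(2) unfolding ldeg_def by fastforce

lemma ldeg_eqI: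
  assumes "finite {k. c k \<noteq> 0}" "c d \<noteq> 0" "\<And>k. d < k \<Longrightarrow> c k = 0"
  shows "ldeg c = d"
  unfolding ldeg_def using assms by (intro Max_eqI) (auto simp: not_le[symmetric])

lemma recurrence_step_from_lower:
  fixes f g h :: "int \<Rightarrow> int"
  assumes fin: "finite {k. f k \<noteq> 0}" "finite {k. g k \<noteq> 0}" "finite {k. h k \<noteq> 0}"
    and f: "\<exists>k. f k \<noteq> 0"
    and rec: "\<And>k. h k = - g (k - 1) + g (k - 3) + f (k - 4)"
    and le: "ldeg g \<le> ldeg f"
  shows "ldeg h = ldeg f + 4 \<and> lcoeff h = lcoeff f"
proof -
  have top: "h (ldeg f + 4) = f (ldeg f)"
    using rec[of "ldeg f + 4"] coeff_above_ldeg[OF fin(2), of "ldeg f + 3"]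
      coeff_above_ldeg[OF fin(2), of "ldeg f + 1"] le by (simp add: ac_simps)
  have "h k = 0" if "ldeg f + 4 < k" for k
    using rec[of k] coeff_above_ldeg[OF fin(2), of "k - 1"] coeff_above_ldeg[OF fin(2), of "k - 3"]
      coeff_above_ldeg[OF fin(1), of "k - 4"] le that by simp
  then have "ldeg h = ldeg f + 4"
    using top ldeg_nonzero[OF fin(1) f] by (intro ldeg_eqI[OF fin(3)]) auto
  then show ?thesis
    unfolding lcoeff_def using top by simp
qed

lemma recurrence_step_from_higher:
  fixes f g h :: "int \<Rightarrow> int"
  assumes fin: "finite {k. f k \<noteq> 0}" "finite {k. g k \<noteq> 0}" "finite {k. h k \<noteq> 0}"
    and g: "\<exists>k. g k \<noteq> 0"
    and rec: "\<And>k. h k = - g (k - 1) + g (k - 3) + f (k - 4)"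
    and gap: "ldeg f + 2 \<le> ldeg g"
  shows "ldeg h = ldeg g + 3 \<and> lcoeff h = lcoeff g"
proof -
  have top: "h (ldeg g + 3) = g (ldeg g)"
    using rec[of "ldeg g + 3"] coeff_above_ldeg[OF fin(2), of "ldeg g + 2"]
      coeff_above_ldeg[OF fin(1), of "ldeg g - 1"] gap by (simp add: ac_simps)
  have "h k = 0" if "ldeg g + 3 < k" for k
    using rec[of k] coeff_above_ldeg[OF fin(2), of "k - 1"] coeff_above_ldeg[OF fin(2), of "k - 3"]
      coeff_above_ldeg[OF fin(1), of "k - 4"] gap that by simp
  then have "ldeg h = ldeg g + 3"
    using top ldeg_nonzero[OF fin(2) g] by (intro ldeg_eqI[OF fin(3)]) auto
  then show ?thesis
    unfolding lcoeff_def using top by simp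
qed

lemma ldeg_growth_after_drop:
  fixes V :: "int \<Rightarrow> int \<Rightarrow> int" and e :: int
  assumes fin: "\<And>x. finite {k. V x k \<noteq> 0}" and nonzero: "\<And>x. \<exists>k. V x k \<noteq> 0"
    and rec: "\<And>x k. V (x + 2) k = - V (x + 1) (k - 1) + V (x + 1) (k - 3) + V x (k - 4)"
    and drop: "ldeg (V (e + 1)) \<le> ldeg (V e)"
  shows "ldeg (V (e + int k + 2)) = ldeg (V e) + 3 * int k + 4
      \<and> lcoeff (V (e + int k + 2)) = lcoeff (V e)
      \<and> ldeg (V (e + int k + 1)) + 2 \<le> ldeg (V (e + int k + 2))"
proof (induction k)
  case 0
  have "ldeg (V (e + 2)) = ldeg (V e) + 4 \<and> lcoeff (V (e + 2)) = lcoeff (V e)"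
    using rec[of e] by (intro recurrence_step_from_lower[OF fin fin fin nonzero _ drop]) (simp add: add.assoc)
  then show ?case
    using drop by simp
next
  case (Suc k)
  let ?f = "V (e + int k + 1)" and ?g = "V (e + int k + 2)" and ?h = "V (e + int k + 3)"
  have rec': "?h j = - ?g (j - 1) + ?g (j - 3) + ?f (j - 4)" for j
    using rec[of "e + int k + 1" j] by (simp add: ac_simps)
  have "ldeg ?f + 2 \<le> ldeg ?g"
    using Suc.IH by blast
  then have "ldeg ?h = ldeg ?g + 3 \<and> lcoeff ?h = lcoeff ?g"
    by (rule recurrence_step_from_higher[OF fin fin fin nonzero rec'])
  moreover have "e + int (Suc k) + 2 = e + int k + 3" "e + int (Suc k) + 1 = e + int k + 2"
    by simp_all
  ultimately show ?case
    using Suc.IH by (simp only:) (simp add: algebra_simps)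
qed

lemma degree_growth_after_drop:
  fixes V :: "int \<Rightarrow> int \<Rightarrow> int" and e :: int
  assumes fin: "\<And>x. finite {k. V x k \<noteq> 0}" and nonzero: "\<And>x. \<exists>k. V x k \<noteq> 0"
    and rec: "\<And>x k. V (x + 2) k = - V (x + 1) (k - 1) + V (x + 1) (k - 3) + V x (k - 4)"
    and drop: "ldeg (V (e + 1)) \<le> ldeg (V e)"
  shows "(\<forall>m::int. m \<ge> 1 \<longrightarrow> ldeg (V (e + m + 1)) > 1 + ldeg (V (e + m)))
       \<and> (\<forall>m::int. m \<ge> 2 \<longrightarrow> ldeg (V (e + m)) = ldeg (V e) + 3 * m - 2
                                 \<and> lcoeff (V (e + m)) = lcoeff (V e))"
proof (intro conjI allI impI)
  note growth = ldeg_growth_after_drop[OF fin nonzero rec drop]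
  fix m :: int assume m: "1 \<le> m"
  show "1 + ldeg (V (e + m)) < ldeg (V (e + m + 1))"
  proof (cases "m = 1")
    case True
    then show ?thesis
      using growth[of 0] drop by (simp add: add.assoc)
  next
    case False
    then obtain k where "m = int k + 2"
      using m zle_iff_zadd[of 2 m] by (auto simp: add.commute)
    then show ?thesis
      using growth[of "Suc k"] by (simp add: ac_simps)
  qed
next
  note growth = ldeg_growth_after_drop[OF fin nonzero rec drop]
  fix m :: int assume "2 \<le> m"
  then obtain k where "m = int k + 2"
    using zle_iff_zadd[of 2 m] by (auto simp: add.commute)
  then show "ldeg (V (e + m)) = ldeg (V e) + 3 * m - 2" "lcoeff (V (e + m)) = lcoeff (V e)"
    using growth[of k] by (simp_all add: ac_simps)
qed

lemma set_monomial_word: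
  assumes "l \<in> set (monomial_word gs es)"
  shows "fst l \<in> set gs \<and> (snd l = 1 \<or> snd l = -1)"
proof -
  obtain i x where ix: "(i, x) \<in> set (zip gs es)" "l \<in> set (gen_power i x)"
    using assms unfolding monomial_word_def by auto
  then have "l = (i, sgn x)" "x \<noteq> 0"
    by (auto simp: gen_power_def)
  moreover have "i \<in> set gs"
    using ix(1) by (rule set_zip_leftD)
  ultimately show ?thesis
    by (auto simp: sgn_if)
qed

lemma monomial_word_split:
  assumes "j < length gens"
  obtains \<alpha> \<gamma> where "\<And>x. monomial_word gens (map (\<lambda>h. if h = j then x else a h) [0..<length gens])
    = \<alpha> @ gen_power (gens ! j) x @ \<gamma>"
proof -
  define Z where "Z = zip gens (map (\<lambda>h. if h = j then 0 else a h) [0..<length gens])"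
  have "zip gens (map (\<lambda>h. if h = j then x else a h) [0..<length gens]) = Z[j := (gens ! j, x)]" for x
  proof -
    have "map (\<lambda>h. if h = j then x else a h) [0..<length gens]
        = (map (\<lambda>h. if h = j then 0 else a h) [0..<length gens])[j := x]"
      by (rule nth_equalityI) (auto simp: nth_list_update)
    then show ?thesis
      unfolding Z_def by (metis list_update_id zip_update)
  qed
  moreover have "j < length Z"
    using assms by (simp add: Z_def)
  ultimately show ?thesis
    by (intro that[of "concat (map (\<lambda>(i, a). gen_power i a) (take j Z))"
          "concat (map (\<lambda>(i, a). gen_power i a) (drop (Suc j) Z))"])
      (simp add: monomial_word_def upd_conv_take_nth_drop)
qed

theorem proposition3p3:
  fixes n :: nat and gens :: "nat list" and j :: nat and a :: "nat \<Rightarrow> int"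
    and V :: "int \<Rightarrow> int \<Rightarrow> int" and e :: int
  assumes gens: "\<forall>i\<in>set gens. 1 \<le> i \<and> i < n"
    and j: "j < length gens"
    and V_def: "\<And>x. V x = jones n (monomial_word gens
                   (map (\<lambda>h. if h = j then x else a h) [0..<length gens]))"
    and hyp: "ldeg (V (e + 1)) \<le> ldeg (V e)"
  shows "(\<forall>m::int. m \<ge> 1 \<longrightarrow> ldeg (V (e + m + 1)) > 1 + ldeg (V (e + m)))
       \<and> (\<forall>m::int. m \<ge> 2 \<longrightarrow> ldeg (V (e + m)) = ldeg (V e) + 3 * m - 2
                                 \<and> lcoeff (V (e + m)) = lcoeff (V e))"
proof -
  obtain \<alpha> \<gamma> where word: "\<And>x. monomial_word gens (map (\<lambda>h. if h = j then x else a h) [0..<length gens])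
      = \<alpha> @ gen_power (gens ! j) x @ \<gamma>"
    using monomial_word_split[OF j] by blast
  define i where "i = gens ! j"
  have letters: "1 \<le> fst l \<and> fst l < n \<and> (snd l = 1 \<or> snd l = -1)"
    if "l \<in> set (\<alpha> @ gen_power i x @ \<gamma>)" for l x
    using set_monomial_word[of l] that gens unfolding word[symmetric] i_def by blast
  have valid: "valid_word n (\<alpha> @ \<gamma>)"
    using letters[of _ 0] by (auto simp: valid_word_def gen_power_def)
  have i: "1 \<le> i" "i < n"
    using gens j by (auto simp: i_def)
  have V: "V = (\<lambda>x. jones n (\<alpha> @ gen_power i x @ \<gamma>))"
    using V_def word by (auto simp: i_def)
  show ?thesis
    unfolding V
  proof (rule degree_growth_after_drop)
    show "\<exists>k. jones n (\<alpha> @ gen_power i x @ \<gamma>) k \<noteq> 0" for x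
      using letters by (intro jones_nonzero) (auto simp: unit_exponents_def)
  qed (use finite_jones_support jones_power_recurrence[OF valid i] hyp[unfolded V] in auto)
qed

end
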